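(* Let $(W,S)$ be a Coxeter system with $S$ finite, and let $\mathcal{R}_W\subseteq S$ be a complete set of representatives of the $W$-conjugacy classes of elements of $Q_W$, with $c(W)$ the number of these classes. Then the abelianization $\operatorname{Ad}(Q_W)_{\mathrm{Ab}}$ is the free abelian group with basis $\{[e_s]\mid s\in\mathcal{R}_W\}$. In particular $\operatorname{Ad}(Q_W)_{\mathrm{Ab}}\cong\mathbb{Z}^{c(W)}$.
   Context: A Coxeter system $(W,S)$: $S$ finite, $m:S\times S\to\mathbb{N}\cup\{\infty\}$ with $m(s,s)=1$, $2\le m(s,t)=m(t,s)\le\infty$ for $s\ne t$, $W=\langle s\in S\mid (st)^{m(s,t)}=1\ (m(s,t)<\infty)\rangle$. The Coxeter quandle is $Q_W=\bigcup_{w\in W}w^{-1}Sw$ with $x\ast y=yxy$, and $\operatorname{Ad}(Q_W)=\langle e_x\ (x\in Q_W)\mid e_y^{-1}e_xe_y=e_{x\ast y}\rangle$. For a group $G$, $G_{\mathrm{Ab}}=G/[G,G]$ and $[g]$ denotes the image of $g$ in $G_{\mathrm{Ab}}$. *)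

theory Defs
  imports "HOL-Algebra.Algebra" "HOL-Library.Extended_Nat"
begin

text \<open>Words over generators Xg are lists of (generator, sign); True = x, False = x^-1.
  pres_rel Xg Rl is the congruence on such words generated by free cancellation and
  deletion of relators from Rl.\<close>

inductive_set pres_rel :: "'x set \<Rightarrow> ('x \<times> bool) list set \<Rightarrow> (('x \<times> bool) list \<times> ('x \<times> bool) list) set"
  for Xg Rl where
  prefl: "w \<in> lists (Xg \<times> UNIV) \<Longrightarrow> (w, w) \<in> pres_rel Xg Rl"
| psym: "(u, v) \<in> pres_rel Xg Rl \<Longrightarrow> (v, u) \<in> pres_rel Xg Rl"
| ptrans: "(u, v) \<in> pres_rel Xg Rl \<Longrightarrow> (v, w) \<in> pres_rel Xg Rl \<Longrightarrow> (u, w) \<in> pres_rel Xg Rl"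
| pcancel: "u \<in> lists (Xg \<times> UNIV) \<Longrightarrow> v \<in> lists (Xg \<times> UNIV) \<Longrightarrow> x \<in> Xg \<Longrightarrow>
      (u @ [(x, b), (x, \<not> b)] @ v, u @ v) \<in> pres_rel Xg Rl"
| prel: "u \<in> lists (Xg \<times> UNIV) \<Longrightarrow> v \<in> lists (Xg \<times> UNIV) \<Longrightarrow> r \<in> Rl \<Longrightarrow> r \<in> lists (Xg \<times> UNIV) \<Longrightarrow>
      (u @ r @ v, u @ v) \<in> pres_rel Xg Rl"

definition presented_group :: "'x set \<Rightarrow> ('x \<times> bool) list set \<Rightarrow> ('x \<times> bool) list set monoid" where
  "presented_group Xg Rl =
     \<lparr> carrier = lists (Xg \<times> UNIV) // pres_rel Xg Rl,
       monoid.mult = (\<lambda>A B. pres_rel Xg Rl `` {(SOME a. a \<in> A) @ (SOME b. b \<in> B)}),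
       one = pres_rel Xg Rl `` {[]} \<rparr>"

definition pres_gen :: "'x set \<Rightarrow> ('x \<times> bool) list set \<Rightarrow> 'x \<Rightarrow> ('x \<times> bool) list set" where
  "pres_gen Xg Rl x = pres_rel Xg Rl `` {[(x, True)]}"

text \<open>Coxeter matrix m with values in nat \<union> {\<infinity>} (enat). Relators (st)^{m(s,t)} for finite m(s,t);
  for s = t and m(s,s) = 1 this is s^2.\<close>
definition coxeter_relators :: "'a set \<Rightarrow> ('a \<Rightarrow> 'a \<Rightarrow> enat) \<Rightarrow> ('a \<times> bool) list set" where
  "coxeter_relators S m =
     {concat (replicate k [(s, True), (t, True)]) | s t k. s \<in> S \<and> t \<in> S \<and> m s t = enat k}"

definition coxeter_group :: "'a set \<Rightarrow> ('a \<Rightarrow> 'a \<Rightarrow> enat) \<Rightarrow> ('a \<times> bool) list set monoid" where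
  "coxeter_group S m = presented_group S (coxeter_relators S m)"

definition cox_gen :: "'a set \<Rightarrow> ('a \<Rightarrow> 'a \<Rightarrow> enat) \<Rightarrow> 'a \<Rightarrow> ('a \<times> bool) list set" where
  "cox_gen S m s = pres_gen S (coxeter_relators S m) s"

definition coxeter_quandle :: "'a set \<Rightarrow> ('a \<Rightarrow> 'a \<Rightarrow> enat) \<Rightarrow> ('a \<times> bool) list set set" where
  "coxeter_quandle S m =
     {inv\<^bsub>coxeter_group S m\<^esub> w \<otimes>\<^bsub>coxeter_group S m\<^esub> cox_gen S m s \<otimes>\<^bsub>coxeter_group S m\<^esub> w
       | w s. w \<in> carrier (coxeter_group S m) \<and> s \<in> S}"

definition quandle_op :: "'a set \<Rightarrow> ('a \<Rightarrow> 'a \<Rightarrow> enat) \<Rightarrow>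
    ('a \<times> bool) list set \<Rightarrow> ('a \<times> bool) list set \<Rightarrow> ('a \<times> bool) list set" where
  "quandle_op S m x y = y \<otimes>\<^bsub>coxeter_group S m\<^esub> x \<otimes>\<^bsub>coxeter_group S m\<^esub> y"

text \<open>Adjoint group Ad(Q_W) = \<langle>e_x (x \<in> Q_W) | e_y^-1 e_x e_y = e_{x*y}\<rangle>,
  relators e_y^-1 e_x e_y e_{x*y}^-1.\<close>
definition adjoint_relators :: "'a set \<Rightarrow> ('a \<Rightarrow> 'a \<Rightarrow> enat) \<Rightarrow>
    (('a \<times> bool) list set \<times> bool) list set" where
  "adjoint_relators S m =
     {[(y, False), (x, True), (y, True), (quandle_op S m x y, False)] | x y.
        x \<in> coxeter_quandle S m \<and> y \<in> coxeter_quandle S m}"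

definition adjoint_group :: "'a set \<Rightarrow> ('a \<Rightarrow> 'a \<Rightarrow> enat) \<Rightarrow>
    (('a \<times> bool) list set \<times> bool) list set monoid" where
  "adjoint_group S m = presented_group (coxeter_quandle S m) (adjoint_relators S m)"

definition adj_gen :: "'a set \<Rightarrow> ('a \<Rightarrow> 'a \<Rightarrow> enat) \<Rightarrow> ('a \<times> bool) list set \<Rightarrow>
    (('a \<times> bool) list set \<times> bool) list set" where
  "adj_gen S m x = pres_gen (coxeter_quandle S m) (adjoint_relators S m) x"

definition abelianization :: "('g, 'b) monoid_scheme \<Rightarrow> 'g set monoid" where
  "abelianization G = G Mod (derived G (carrier G))"

definition ab_class :: "('g, 'b) monoid_scheme \<Rightarrow> 'g \<Rightarrow> 'g set" where
  "ab_class G g = derived G (carrier G) #>\<^bsub>G\<^esub> g"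

end

theory Submission
  imports Defs
begin

text \<open>Conjugation by a generator t of W is the quandle operation with t, so the relators
  of Ad(Q_W) identify [e_x] with [e_{w^-1 x w}] in the abelianization; hence [e_x] = [e_s]
  for the representative s \<in> R_W of the class of x, and the [e_s] generate Ad(Q_W)_Ab.
  Conversely e_x \<mapsto> (basis element of the representative of x) respects the relators and
  gives a surjection of Ad(Q_W) onto the free abelian group on R_W. Composed with the map
  back, frag_of s \<mapsto> [e_s], it is the quotient map, so its kernel is exactly the
  commutator subgroup.\<close>

section \<open>Presented groups\<close>

lemma pres_rel_lists:
  assumes "(u, v) \<in> pres_rel Xg Rl"
  shows "u \<in> lists (Xg \<times> UNIV)" "v \<in> lists (Xg \<times> UNIV)"
  using assms by induction auto

lemma equiv_pres_rel: "equiv (lists (Xg \<times> UNIV)) (pres_rel Xg Rl)"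
proof (rule equivI)
  show sub: "pres_rel Xg Rl \<subseteq> lists (Xg \<times> UNIV) \<times> lists (Xg \<times> UNIV)"
    by (auto dest: pres_rel_lists)
  then show "refl_on (lists (Xg \<times> UNIV)) (pres_rel Xg Rl)"
    unfolding refl_on_def by (auto intro: prefl)
  show "sym (pres_rel Xg Rl)" unfolding sym_def by (simp add: psym)
  show "trans (pres_rel Xg Rl)" unfolding trans_def using ptrans by fast
qed

lemma pres_rel_append_left:
  assumes "(u, v) \<in> pres_rel Xg Rl" "w \<in> lists (Xg \<times> UNIV)"
  shows "(w @ u, w @ v) \<in> pres_rel Xg Rl"
  using assms
proof induction
  case (ptrans u v w')
  then show ?case by (metis pres_rel.ptrans)
next
  case (pcancel u v x b)
  then show ?case using pres_rel.pcancel[of "w @ u" Xg v x b Rl] by simp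
next
  case (prel u v r)
  then show ?case using pres_rel.prel[of "w @ u" Xg v r Rl] by simp
next
  case (prefl u)
  then show ?case by (intro pres_rel.prefl) auto
qed (simp add: pres_rel.psym)

lemma pres_rel_append_right:
  assumes "(u, v) \<in> pres_rel Xg Rl" "w \<in> lists (Xg \<times> UNIV)"
  shows "(u @ w, v @ w) \<in> pres_rel Xg Rl"
  using assms
proof induction
  case (ptrans u v w')
  then show ?case by (metis pres_rel.ptrans)
next
  case (pcancel u v x b)
  then show ?case using pres_rel.pcancel[of u Xg "v @ w" x b Rl] by simp
next
  case (prel u v r)
  then show ?case using pres_rel.prel[of u Xg "v @ w" r Rl] by simp
next
  case (prefl u)
  then show ?case by (intro pres_rel.prefl) auto
qed (simp add: pres_rel.psym)

lemma pres_rel_append: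
  assumes "(u, u') \<in> pres_rel Xg Rl" "(v, v') \<in> pres_rel Xg Rl"
  shows "(u @ v, u' @ v') \<in> pres_rel Xg Rl"
proof (rule ptrans)
  show "(u @ v, u' @ v) \<in> pres_rel Xg Rl"
    using assms(1) pres_rel_lists(1)[OF assms(2)] by (rule pres_rel_append_right)
  show "(u' @ v, u' @ v') \<in> pres_rel Xg Rl"
    using assms(2) pres_rel_lists(2)[OF assms(1)] by (rule pres_rel_append_left)
qed

lemma pres_class_mult:
  assumes "u \<in> lists (Xg \<times> UNIV)" "v \<in> lists (Xg \<times> UNIV)"
  shows "pres_rel Xg Rl `` {u} \<otimes>\<^bsub>presented_group Xg Rl\<^esub> pres_rel Xg Rl `` {v}
    = pres_rel Xg Rl `` {u @ v}"
proof -
  let ?P = "pres_rel Xg Rl"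
  define a where "a = (SOME a. a \<in> ?P `` {u})"
  define b where "b = (SOME b. b \<in> ?P `` {v})"
  have "u \<in> ?P `` {u}" "v \<in> ?P `` {v}" using assms by (auto intro: prefl)
  then have "a \<in> ?P `` {u}" "b \<in> ?P `` {v}" unfolding a_def b_def by (auto intro: someI)
  then have "(u @ v, a @ b) \<in> ?P" by (auto intro: pres_rel_append)
  then have "?P `` {a @ b} = ?P `` {u @ v}"
    by (rule equiv_class_eq[OF equiv_pres_rel psym])
  then show ?thesis unfolding presented_group_def a_def b_def by simp
qed

lemma pres_classE:
  assumes "A \<in> carrier (presented_group Xg Rl)"
  obtains u where "u \<in> lists (Xg \<times> UNIV)" "A = pres_rel Xg Rl `` {u}"
  using assms unfolding presented_group_def by (auto elim!: quotientE)

lemma pres_class_closed: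
  "u \<in> lists (Xg \<times> UNIV) \<Longrightarrow> pres_rel Xg Rl `` {u} \<in> carrier (presented_group Xg Rl)"
  unfolding presented_group_def by (auto intro: quotientI)

lemma presented_group_one: "\<one>\<^bsub>presented_group Xg Rl\<^esub> = pres_rel Xg Rl `` {[]}"
  unfolding presented_group_def by simp

definition inverse_word :: "('x \<times> bool) list \<Rightarrow> ('x \<times> bool) list" where
  "inverse_word w = rev (map (\<lambda>(x, b). (x, \<not> b)) w)"

lemma inverse_word_lists: "w \<in> lists (Xg \<times> UNIV) \<Longrightarrow> inverse_word w \<in> lists (Xg \<times> UNIV)"
  unfolding inverse_word_def by auto

lemma pres_rel_inverse_word_append:
  "w \<in> lists (Xg \<times> UNIV) \<Longrightarrow> (inverse_word w @ w, []) \<in> pres_rel Xg Rl"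
proof (induction w)
  case Nil
  then show ?case by (auto intro: prefl simp: inverse_word_def)
next
  case (Cons a w)
  obtain x b where a: "a = (x, b)" by force
  have "(inverse_word w @ [(x, \<not> b), (x, \<not> \<not> b)] @ w, inverse_word w @ w) \<in> pres_rel Xg Rl"
    using Cons a inverse_word_lists by (intro pcancel) auto
  then have "(inverse_word (a # w) @ a # w, inverse_word w @ w) \<in> pres_rel Xg Rl"
    using a by (simp add: inverse_word_def)
  moreover have "(inverse_word w @ w, []) \<in> pres_rel Xg Rl" using Cons by simp
  ultimately show ?case by (rule ptrans)
qed

lemma group_presented_group: "group (presented_group Xg Rl)"
proof (rule groupI)
  fix x y assume "x \<in> carrier (presented_group Xg Rl)" "y \<in> carrier (presented_group Xg Rl)"
  then obtain u v where "u \<in> lists (Xg \<times> UNIV)" "x = pres_rel Xg Rl `` {u}"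
    "v \<in> lists (Xg \<times> UNIV)" "y = pres_rel Xg Rl `` {v}"
    by (elim pres_classE) blast
  then show "x \<otimes>\<^bsub>presented_group Xg Rl\<^esub> y \<in> carrier (presented_group Xg Rl)"
    by (simp add: pres_class_mult pres_class_closed)
next
  show "\<one>\<^bsub>presented_group Xg Rl\<^esub> \<in> carrier (presented_group Xg Rl)"
    unfolding presented_group_one by (rule pres_class_closed) simp
next
  fix x y z assume "x \<in> carrier (presented_group Xg Rl)" "y \<in> carrier (presented_group Xg Rl)"
    "z \<in> carrier (presented_group Xg Rl)"
  then obtain u v w where uvw: "u \<in> lists (Xg \<times> UNIV)" "x = pres_rel Xg Rl `` {u}"
    "v \<in> lists (Xg \<times> UNIV)" "y = pres_rel Xg Rl `` {v}"
    "w \<in> lists (Xg \<times> UNIV)" "z = pres_rel Xg Rl `` {w}"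
    by (elim pres_classE) blast
  then have "u @ v \<in> lists (Xg \<times> UNIV)" "v @ w \<in> lists (Xg \<times> UNIV)" by simp_all
  with uvw show "x \<otimes>\<^bsub>presented_group Xg Rl\<^esub> y \<otimes>\<^bsub>presented_group Xg Rl\<^esub> z =
      x \<otimes>\<^bsub>presented_group Xg Rl\<^esub> (y \<otimes>\<^bsub>presented_group Xg Rl\<^esub> z)"
    by (simp only: pres_class_mult append_assoc)
next
  fix x assume "x \<in> carrier (presented_group Xg Rl)"
  then obtain u where "u \<in> lists (Xg \<times> UNIV)" "x = pres_rel Xg Rl `` {u}"
    by (rule pres_classE)
  then show "\<one>\<^bsub>presented_group Xg Rl\<^esub> \<otimes>\<^bsub>presented_group Xg Rl\<^esub> x = x"
    using pres_class_mult[of "[]" Xg u Rl] by (simp add: presented_group_one)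
next
  fix x assume "x \<in> carrier (presented_group Xg Rl)"
  then obtain u where u: "u \<in> lists (Xg \<times> UNIV)" "x = pres_rel Xg Rl `` {u}"
    by (rule pres_classE)
  have "pres_rel Xg Rl `` {inverse_word u} \<otimes>\<^bsub>presented_group Xg Rl\<^esub> x
      = pres_rel Xg Rl `` {inverse_word u @ u}"
    unfolding u(2) using u(1) by (simp add: pres_class_mult inverse_word_lists)
  also have "\<dots> = \<one>\<^bsub>presented_group Xg Rl\<^esub>"
    unfolding presented_group_one
    by (rule equiv_class_eq[OF equiv_pres_rel pres_rel_inverse_word_append[OF u(1)]])
  finally show "\<exists>y\<in>carrier (presented_group Xg Rl).
      y \<otimes>\<^bsub>presented_group Xg Rl\<^esub> x = \<one>\<^bsub>presented_group Xg Rl\<^esub>"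
    using pres_class_closed[OF inverse_word_lists[OF u(1)]] by blast
qed

section \<open>Word evaluation and the universal property\<close>

fun word_eval :: "('g, 'c) monoid_scheme \<Rightarrow> ('x \<Rightarrow> 'g) \<Rightarrow> ('x \<times> bool) list \<Rightarrow> 'g" where
  "word_eval H f [] = \<one>\<^bsub>H\<^esub>"
| "word_eval H f ((x, b) # w) =
     (if b then f x else inv\<^bsub>H\<^esub> f x) \<otimes>\<^bsub>H\<^esub> word_eval H f w"

lemma (in group) word_eval_closed:
  "f ` Xg \<subseteq> carrier G \<Longrightarrow> w \<in> lists (Xg \<times> UNIV) \<Longrightarrow> word_eval G f w \<in> carrier G"
  by (induction w) auto

lemma (in group) word_eval_append:
  assumes f: "f ` Xg \<subseteq> carrier G" and "u \<in> lists (Xg \<times> UNIV)" "v \<in> lists (Xg \<times> UNIV)"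
  shows "word_eval G f (u @ v) = word_eval G f u \<otimes> word_eval G f v"
  using assms(2)
proof (induction u)
  case Nil
  then show ?case using word_eval_closed[OF f assms(3)] by simp
next
  case (Cons a u)
  obtain x b where a: "a = (x, b)" by force
  with Cons f have "f x \<in> carrier G" by auto
  with Cons a assms(3) show ?case by (auto simp: m_assoc word_eval_closed[OF f])
qed

lemma (in group) word_eval_respects_pres_rel:
  assumes f: "f ` Xg \<subseteq> carrier G"
    and relators: "\<And>r. r \<in> Rl \<Longrightarrow> r \<in> lists (Xg \<times> UNIV) \<Longrightarrow> word_eval G f r = \<one>"
    and "(u, v) \<in> pres_rel Xg Rl"
  shows "word_eval G f u = word_eval G f v"
  using assms(3)
proof induction
  case (pcancel u v x b)
  have "f x \<in> carrier G" using pcancel f by auto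
  then have "word_eval G f ([(x, b), (x, \<not> b)] @ v) = word_eval G f v"
    using word_eval_closed[OF f pcancel(2)] by (cases b) (simp_all add: m_assoc[symmetric])
  moreover have "[(x, b), (x, \<not> b)] @ v \<in> lists (Xg \<times> UNIV)" using pcancel by auto
  ultimately show ?case using pcancel by (simp add: word_eval_append[OF f])
next
  case (prel u v r)
  then show ?case
    using relators by (simp add: word_eval_append[OF f] word_eval_closed[OF f])
qed auto

definition pres_lift ::
    "('g, 'c) monoid_scheme \<Rightarrow> ('x \<Rightarrow> 'g) \<Rightarrow> ('x \<times> bool) list set \<Rightarrow> 'g" where
  "pres_lift H f A = word_eval H f (SOME w. w \<in> A)"

context group
begin

lemma pres_lift_class:
  assumes f: "f ` Xg \<subseteq> carrier G"
    and relators: "\<And>r. r \<in> Rl \<Longrightarrow> r \<in> lists (Xg \<times> UNIV) \<Longrightarrow> word_eval G f r = \<one>"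
    and u: "u \<in> lists (Xg \<times> UNIV)"
  shows "pres_lift G f (pres_rel Xg Rl `` {u}) = word_eval G f u"
proof -
  have "u \<in> pres_rel Xg Rl `` {u}" using prefl[OF u] by simp
  then have "(SOME w. w \<in> pres_rel Xg Rl `` {u}) \<in> pres_rel Xg Rl `` {u}" by (rule someI)
  then show ?thesis
    unfolding pres_lift_def using word_eval_respects_pres_rel[OF f relators] by simp
qed

lemma pres_lift_hom:
  assumes f: "f ` Xg \<subseteq> carrier G"
    and relators: "\<And>r. r \<in> Rl \<Longrightarrow> r \<in> lists (Xg \<times> UNIV) \<Longrightarrow> word_eval G f r = \<one>"
  shows "pres_lift G f \<in> hom (presented_group Xg Rl) G"
proof (rule homI)
  fix A assume "A \<in> carrier (presented_group Xg Rl)"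
  then obtain u where "u \<in> lists (Xg \<times> UNIV)" "A = pres_rel Xg Rl `` {u}"
    by (rule pres_classE)
  then show "pres_lift G f A \<in> carrier G"
    by (simp add: pres_lift_class[OF f relators] word_eval_closed[OF f])
next
  fix A B assume "A \<in> carrier (presented_group Xg Rl)" "B \<in> carrier (presented_group Xg Rl)"
  then obtain u v where "u \<in> lists (Xg \<times> UNIV)" "A = pres_rel Xg Rl `` {u}"
    "v \<in> lists (Xg \<times> UNIV)" "B = pres_rel Xg Rl `` {v}"
    by (elim pres_classE) blast
  then show "pres_lift G f (A \<otimes>\<^bsub>presented_group Xg Rl\<^esub> B) = pres_lift G f A \<otimes> pres_lift G f B"
    by (simp add: pres_class_mult pres_lift_class[OF f relators] word_eval_append[OF f])
qed

end

lemma (in group_hom) hom_word_eval: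
  assumes f: "f ` Xg \<subseteq> carrier G" and "w \<in> lists (Xg \<times> UNIV)"
  shows "h (word_eval G f w) = word_eval H (h \<circ> f) w"
  using assms(2)
proof (induction w)
  case (Cons a w)
  obtain x b where a: "a = (x, b)" by force
  with Cons f have fx: "f x \<in> carrier G" by auto
  have "word_eval G f w \<in> carrier G" using Cons a by (simp add: G.word_eval_closed[OF f])
  with Cons a fx show ?case by (cases b) simp_all
qed simp

lemma pres_gen_closed: "x \<in> Xg \<Longrightarrow> pres_gen Xg Rl x \<in> carrier (presented_group Xg Rl)"
  unfolding pres_gen_def by (rule pres_class_closed) simp

lemma pres_class_inverse_letter:
  assumes x: "x \<in> Xg"
  shows "pres_rel Xg Rl `` {[(x, False)]} = inv\<^bsub>presented_group Xg Rl\<^esub> pres_gen Xg Rl x"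
proof -
  have l: "[(x, False)] \<in> lists (Xg \<times> UNIV)" "[(x, True)] \<in> lists (Xg \<times> UNIV)" using x by auto
  have "([] @ [(x, False), (x, \<not> False)] @ [], [] @ []) \<in> pres_rel Xg Rl"
    using x by (intro pcancel) auto
  then have "pres_rel Xg Rl `` {[(x, False)] @ [(x, True)]} = \<one>\<^bsub>presented_group Xg Rl\<^esub>"
    unfolding presented_group_one by (intro equiv_class_eq[OF equiv_pres_rel]) simp
  then have "pres_rel Xg Rl `` {[(x, False)]} \<otimes>\<^bsub>presented_group Xg Rl\<^esub> pres_gen Xg Rl x
      = \<one>\<^bsub>presented_group Xg Rl\<^esub>"
    unfolding pres_gen_def pres_class_mult[OF l] .
  then show ?thesis
    using group.inv_equality[OF group_presented_group _ pres_gen_closed[OF x] pres_class_closed[OF l(1)]]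
    by simp
qed

lemma pres_class_eq_word_eval:
  "u \<in> lists (Xg \<times> UNIV) \<Longrightarrow>
    pres_rel Xg Rl `` {u} = word_eval (presented_group Xg Rl) (pres_gen Xg Rl) u"
proof (induction u)
  case Nil
  then show ?case by (simp add: presented_group_one)
next
  case (Cons a u)
  obtain x b where a: "a = (x, b)" by force
  have x: "x \<in> Xg" and u: "u \<in> lists (Xg \<times> UNIV)" using Cons.prems a by auto
  have "pres_rel Xg Rl `` {a # u}
      = pres_rel Xg Rl `` {[(x, b)]} \<otimes>\<^bsub>presented_group Xg Rl\<^esub> pres_rel Xg Rl `` {u}"
    using pres_class_mult[of "[(x, b)]" Xg u Rl] x u a by simp
  moreover have "pres_rel Xg Rl `` {[(x, b)]}
      = (if b then pres_gen Xg Rl x else inv\<^bsub>presented_group Xg Rl\<^esub> pres_gen Xg Rl x)"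
    using pres_class_inverse_letter[OF x, of Rl] unfolding pres_gen_def by (cases b) simp_all
  ultimately show ?case using Cons.IH[OF u] a by simp
qed

lemma pres_class_relator:
  assumes "r \<in> Rl" "r \<in> lists (Xg \<times> UNIV)"
  shows "pres_rel Xg Rl `` {r} = \<one>\<^bsub>presented_group Xg Rl\<^esub>"
proof -
  have "([] @ r @ [], [] @ []) \<in> pres_rel Xg Rl" using assms by (intro prel) simp_all
  then show ?thesis
    unfolding presented_group_one by (intro equiv_class_eq[OF equiv_pres_rel]) simp
qed

lemma presented_group_hom_eqI:
  assumes H: "group H"
    and g1: "g1 \<in> hom (presented_group Xg Rl) H" and g2: "g2 \<in> hom (presented_group Xg Rl) H"
    and gens: "\<And>x. x \<in> Xg \<Longrightarrow> g1 (pres_gen Xg Rl x) = g2 (pres_gen Xg Rl x)"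
    and A: "A \<in> carrier (presented_group Xg Rl)"
  shows "g1 A = g2 A"
proof -
  interpret g1: group_hom "presented_group Xg Rl" H g1
    using H g1 by (simp add: group_hom_def group_hom_axioms_def group_presented_group)
  interpret g2: group_hom "presented_group Xg Rl" H g2
    using H g2 by (simp add: group_hom_def group_hom_axioms_def group_presented_group)
  obtain u where u: "u \<in> lists (Xg \<times> UNIV)" "A = pres_rel Xg Rl `` {u}"
    using A by (rule pres_classE)
  have f: "pres_gen Xg Rl ` Xg \<subseteq> carrier (presented_group Xg Rl)"
    by (rule image_subsetI) (rule pres_gen_closed)
  have "word_eval H (g1 \<circ> pres_gen Xg Rl) w = word_eval H (g2 \<circ> pres_gen Xg Rl) w"
    if "w \<in> lists (Xg \<times> UNIV)" for w
    using that
  proof (induction w)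
    case (Cons a w)
    obtain x b where "a = (x, b)" by force
    with Cons gens[of x] show ?case by simp
  qed simp
  then have "g1 (word_eval (presented_group Xg Rl) (pres_gen Xg Rl) u)
      = g2 (word_eval (presented_group Xg Rl) (pres_gen Xg Rl) u)"
    using g1.hom_word_eval[OF f u(1)] g2.hom_word_eval[OF f u(1)] u(1) by simp
  then show ?thesis
    using u pres_class_eq_word_eval by metis
qed

context group
begin

lemma mult_inv_cancel_left: "x \<in> carrier G \<Longrightarrow> y \<in> carrier G \<Longrightarrow> x \<otimes> (inv x \<otimes> y) = y"
  by (simp add: m_assoc[symmetric])

lemma inv_mult_cancel_left: "x \<in> carrier G \<Longrightarrow> y \<in> carrier G \<Longrightarrow> inv x \<otimes> (x \<otimes> y) = y"
  by (simp add: m_assoc[symmetric])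

lemma conj_mult:
  assumes "a \<in> carrier G" "w \<in> carrier G" "y \<in> carrier G"
  shows "inv y \<otimes> (inv w \<otimes> a \<otimes> w) \<otimes> y = inv (w \<otimes> y) \<otimes> a \<otimes> (w \<otimes> y)"
  using assms by (simp add: inv_mult_group m_assoc)

lemma conj_inverse:
  assumes "b \<in> carrier G" "v \<in> carrier G" "q = inv v \<otimes> b \<otimes> v"
  shows "b = inv (inv v) \<otimes> q \<otimes> inv v"
  using assms by (simp add: m_assoc mult_inv_cancel_left)

lemma conj_involution:
  assumes "a \<in> carrier G" "w \<in> carrier G" "a \<otimes> a = \<one>"
  shows "(inv w \<otimes> a \<otimes> w) \<otimes> (inv w \<otimes> a \<otimes> w) = \<one>"
proof -
  have "(inv w \<otimes> a \<otimes> w) \<otimes> (inv w \<otimes> a \<otimes> w) = inv w \<otimes> (a \<otimes> a) \<otimes> w"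
    using assms(1,2) by (simp add: m_assoc mult_inv_cancel_left)
  with assms show ?thesis by simp
qed

end

lemma (in comm_group) conj_relator_eq_one_imp_eq:
  assumes "a \<in> carrier G" "b \<in> carrier G" "c \<in> carrier G"
    and "inv a \<otimes> (b \<otimes> (a \<otimes> (inv c \<otimes> \<one>))) = \<one>"
  shows "b = c"
proof -
  have "inv a \<otimes> (b \<otimes> (a \<otimes> (inv c \<otimes> \<one>))) = b \<otimes> inv c"
    using assms(1-3) by (simp add: m_lcomm[of "inv a" b] inv_mult_cancel_left)
  with assms(4) have "b \<otimes> inv c = \<one>" by simp
  then have "b \<otimes> inv c \<otimes> c = c" using assms(3) by simp
  with assms(2,3) show ?thesis by (simp add: m_assoc)
qed

lemma (in group_hom) image_kernel_rcos: "g \<in> carrier G \<Longrightarrow> h ` (kernel G H h #>\<^bsub>G\<^esub> g) = {h g}"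
  unfolding r_coset_def kernel_def by force

section \<open>The Coxeter quandle and its adjoint group\<close>

locale coxeter_adjoint =
  fixes S :: "'a set" and m :: "'a \<Rightarrow> 'a \<Rightarrow> enat"
  assumes m_diag: "\<forall>s\<in>S. m s s = 1"
begin

abbreviation "W \<equiv> coxeter_group S m"
abbreviation "Q \<equiv> coxeter_quandle S m"
abbreviation "G \<equiv> adjoint_group S m"
abbreviation "Ab \<equiv> abelianization G"

sublocale W: group W
  unfolding coxeter_group_def by (rule group_presented_group)

lemma cox_gen_closed: "s \<in> S \<Longrightarrow> cox_gen S m s \<in> carrier W"
  unfolding cox_gen_def coxeter_group_def by (rule pres_gen_closed)

lemma cox_gen_involution:
  assumes s: "s \<in> S"
  shows "cox_gen S m s \<otimes>\<^bsub>W\<^esub> cox_gen S m s = \<one>\<^bsub>W\<^esub>"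
proof -
  have l: "[(s, True)] \<in> lists (S \<times> UNIV)" using s by simp
  have "m s s = enat 1" using m_diag s by (simp add: one_enat_def)
  then have r: "[(s, True), (s, True)] \<in> coxeter_relators S m"
    unfolding coxeter_relators_def using s
    by (intro CollectI exI[of _ s] exI[of _ s] exI[of _ 1]) simp
  have "cox_gen S m s \<otimes>\<^bsub>W\<^esub> cox_gen S m s
      = pres_rel S (coxeter_relators S m) `` {[(s, True)] @ [(s, True)]}"
    unfolding cox_gen_def coxeter_group_def pres_gen_def by (rule pres_class_mult[OF l l])
  also have "\<dots> = \<one>\<^bsub>W\<^esub>"
    unfolding coxeter_group_def using r s by (simp add: pres_class_relator)
  finally show ?thesis .
qed

lemma inv_cox_gen: "s \<in> S \<Longrightarrow> inv\<^bsub>W\<^esub> cox_gen S m s = cox_gen S m s"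
  using W.inv_equality cox_gen_involution cox_gen_closed by blast

lemma coxeter_quandle_iff:
  "q \<in> Q \<longleftrightarrow> (\<exists>w\<in>carrier W. \<exists>s\<in>S. q = inv\<^bsub>W\<^esub> w \<otimes>\<^bsub>W\<^esub> cox_gen S m s \<otimes>\<^bsub>W\<^esub> w)"
  unfolding coxeter_quandle_def by blast

lemma coxeter_quandle_closed: "q \<in> Q \<Longrightarrow> q \<in> carrier W"
  by (auto simp: coxeter_quandle_iff intro: cox_gen_closed)

lemma inv_coxeter_quandle: "q \<in> Q \<Longrightarrow> inv\<^bsub>W\<^esub> q = q"
  by (metis W.inv_equality W.conj_involution coxeter_quandle_iff coxeter_quandle_closed
      cox_gen_closed cox_gen_involution)

lemma cox_gen_in_coxeter_quandle: "s \<in> S \<Longrightarrow> cox_gen S m s \<in> Q"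
  unfolding coxeter_quandle_iff
  by (rule bexI[of _ "\<one>\<^bsub>W\<^esub>"]) (auto simp: cox_gen_closed)

lemma conj_in_coxeter_quandle:
  assumes "w \<in> carrier W" "q \<in> Q"
  shows "inv\<^bsub>W\<^esub> w \<otimes>\<^bsub>W\<^esub> q \<otimes>\<^bsub>W\<^esub> w \<in> Q"
proof -
  obtain v s where v: "v \<in> carrier W" "s \<in> S" "q = inv\<^bsub>W\<^esub> v \<otimes>\<^bsub>W\<^esub> cox_gen S m s \<otimes>\<^bsub>W\<^esub> v"
    using assms(2) coxeter_quandle_iff by blast
  then have "inv\<^bsub>W\<^esub> w \<otimes>\<^bsub>W\<^esub> q \<otimes>\<^bsub>W\<^esub> w
      = inv\<^bsub>W\<^esub> (v \<otimes>\<^bsub>W\<^esub> w) \<otimes>\<^bsub>W\<^esub> cox_gen S m s \<otimes>\<^bsub>W\<^esub> (v \<otimes>\<^bsub>W\<^esub> w)"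
    using W.conj_mult[OF cox_gen_closed[OF v(2)] v(1) assms(1)] by simp
  with v assms(1) show ?thesis unfolding coxeter_quandle_iff by blast
qed

lemma quandle_op_eq_conj:
  "x \<in> Q \<Longrightarrow> y \<in> Q \<Longrightarrow> quandle_op S m x y = inv\<^bsub>W\<^esub> y \<otimes>\<^bsub>W\<^esub> x \<otimes>\<^bsub>W\<^esub> y"
  unfolding quandle_op_def by (simp add: inv_coxeter_quandle)

lemma quandle_op_closed: "x \<in> Q \<Longrightarrow> y \<in> Q \<Longrightarrow> quandle_op S m x y \<in> Q"
  by (simp add: quandle_op_eq_conj conj_in_coxeter_quandle coxeter_quandle_closed)

lemma coxeter_class_letter:
  assumes "s \<in> S"
  shows "pres_rel S (coxeter_relators S m) `` {[(s, b)]} = cox_gen S m s"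
  using assms pres_class_inverse_letter[of s S "coxeter_relators S m"] inv_cox_gen
  by (cases b) (simp_all add: cox_gen_def pres_gen_def coxeter_group_def)

sublocale G: group G
  unfolding adjoint_group_def by (rule group_presented_group)

sublocale Ab: comm_group Ab
  unfolding abelianization_def by (rule G.derived_quot_is_comm_group)

lemma adj_gen_closed: "x \<in> Q \<Longrightarrow> adj_gen S m x \<in> carrier G"
  unfolding adj_gen_def adjoint_group_def by (rule pres_gen_closed)

lemma ab_class_hom: "ab_class G \<in> hom G Ab"
proof -
  have "ab_class G = (\<lambda>a. derived G (carrier G) #>\<^bsub>G\<^esub> a)" by (rule ext) (simp add: ab_class_def)
  then show ?thesis
    unfolding abelianization_def using normal.r_coset_hom_Mod[OF G.derived_self_is_normal] by simp
qed

sublocale ab: group_hom G Ab "ab_class G"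
  by (simp add: group_hom_def group_hom_axioms_def G.group_axioms Ab.group_axioms ab_class_hom)

lemma ab_class_adj_gen_quandle_op:
  assumes x: "x \<in> Q" and y: "y \<in> Q"
  shows "ab_class G (adj_gen S m (quandle_op S m x y)) = ab_class G (adj_gen S m x)"
proof -
  let ?RA = "adjoint_relators S m"
  let ?e = "pres_gen Q ?RA"
  let ?xy = "quandle_op S m x y"
  let ?r = "[(y, False), (x, True), (y, True), (?xy, False)]"
  have xy: "?xy \<in> Q" by (rule quandle_op_closed[OF x y])
  have r: "?r \<in> ?RA" "?r \<in> lists (Q \<times> UNIV)"
    unfolding adjoint_relators_def using x y xy by auto
  have e: "?e ` Q \<subseteq> carrier G"
    by (rule image_subsetI) (simp add: adj_gen_closed[unfolded adj_gen_def])
  have "word_eval G ?e ?r = \<one>\<^bsub>G\<^esub>"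
    using pres_class_relator[OF r] pres_class_eq_word_eval[OF r(2)]
    unfolding adjoint_group_def by simp
  then have "word_eval Ab (ab_class G \<circ> ?e) ?r = \<one>\<^bsub>Ab\<^esub>"
    using ab.hom_word_eval[OF e r(2)] by simp
  then have "inv\<^bsub>Ab\<^esub> ab_class G (adj_gen S m y) \<otimes>\<^bsub>Ab\<^esub> (ab_class G (adj_gen S m x) \<otimes>\<^bsub>Ab\<^esub>
      (ab_class G (adj_gen S m y) \<otimes>\<^bsub>Ab\<^esub> (inv\<^bsub>Ab\<^esub> ab_class G (adj_gen S m ?xy) \<otimes>\<^bsub>Ab\<^esub> \<one>\<^bsub>Ab\<^esub>)))
      = \<one>\<^bsub>Ab\<^esub>"
    by (simp add: adj_gen_def)
  then show ?thesis
    using Ab.conj_relator_eq_one_imp_eq ab.hom_closed adj_gen_closed x y xy by metis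
qed

lemma ab_class_adj_gen_conj:
  assumes w: "w \<in> carrier W" and q: "q \<in> Q"
  shows "ab_class G (adj_gen S m (inv\<^bsub>W\<^esub> w \<otimes>\<^bsub>W\<^esub> q \<otimes>\<^bsub>W\<^esub> w)) = ab_class G (adj_gen S m q)"
proof -
  obtain u where u: "u \<in> lists (S \<times> UNIV)" "w = pres_rel S (coxeter_relators S m) `` {u}"
    using w unfolding coxeter_group_def by (rule pres_classE)
  have "ab_class G (adj_gen S m (inv\<^bsub>W\<^esub> (pres_rel S (coxeter_relators S m) `` {u}) \<otimes>\<^bsub>W\<^esub> q
      \<otimes>\<^bsub>W\<^esub> pres_rel S (coxeter_relators S m) `` {u})) = ab_class G (adj_gen S m q)"
    if "u \<in> lists (S \<times> UNIV)" "q \<in> Q" for u q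
    using that
  proof (induction u arbitrary: q)
    case Nil
    have "pres_rel S (coxeter_relators S m) `` {[]} = \<one>\<^bsub>W\<^esub>"
      unfolding coxeter_group_def by (rule presented_group_one[symmetric])
    with Nil show ?case using coxeter_quandle_closed by simp
  next
    case (Cons a u)
    obtain s b where a: "a = (s, b)" by force
    have s: "s \<in> S" and u: "u \<in> lists (S \<times> UNIV)" using Cons a by auto
    let ?v = "pres_rel S (coxeter_relators S m) `` {u}"
    let ?c = "cox_gen S m s"
    have v: "?v \<in> carrier W" unfolding coxeter_group_def by (rule pres_class_closed[OF u])
    have c: "?c \<in> Q" by (rule cox_gen_in_coxeter_quandle[OF s])
    have "pres_rel S (coxeter_relators S m) `` {a # u} = ?c \<otimes>\<^bsub>W\<^esub> ?v"
      using pres_class_mult[of "[(s, b)]" S u "coxeter_relators S m"] s u a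
      by (simp add: coxeter_class_letter coxeter_group_def)
    moreover have "inv\<^bsub>W\<^esub> (?c \<otimes>\<^bsub>W\<^esub> ?v) \<otimes>\<^bsub>W\<^esub> q \<otimes>\<^bsub>W\<^esub> (?c \<otimes>\<^bsub>W\<^esub> ?v)
        = inv\<^bsub>W\<^esub> ?v \<otimes>\<^bsub>W\<^esub> quandle_op S m q ?c \<otimes>\<^bsub>W\<^esub> ?v"
      using W.conj_mult[OF coxeter_quandle_closed[OF Cons.prems] cox_gen_closed[OF s] v]
        quandle_op_eq_conj[OF Cons.prems c] by simp
    ultimately show ?case
      using Cons.IH[OF quandle_op_closed[OF Cons.prems c]]
        ab_class_adj_gen_quandle_op[OF Cons.prems c] by simp
  qed
  then show ?thesis using u q by simp
qed

end

section \<open>A transversal of the conjugacy classes\<close>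

locale coxeter_transversal = coxeter_adjoint +
  fixes Rp :: "'a set"
  assumes R_sub: "Rp \<subseteq> S"
    and R_cover: "\<forall>q\<in>coxeter_quandle S m. \<exists>s\<in>Rp. \<exists>w\<in>carrier (coxeter_group S m).
      q = inv\<^bsub>coxeter_group S m\<^esub> w \<otimes>\<^bsub>coxeter_group S m\<^esub> cox_gen S m s \<otimes>\<^bsub>coxeter_group S m\<^esub> w"
    and R_distinct: "\<forall>s\<in>Rp. \<forall>t\<in>Rp. (\<exists>w\<in>carrier (coxeter_group S m).
      cox_gen S m t = inv\<^bsub>coxeter_group S m\<^esub> w \<otimes>\<^bsub>coxeter_group S m\<^esub> cox_gen S m s \<otimes>\<^bsub>coxeter_group S m\<^esub> w)
      \<longrightarrow> s = t"
begin

definition rep :: "('a \<times> bool) list set \<Rightarrow> 'a" where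
  "rep q = (SOME s. s \<in> Rp \<and> (\<exists>w\<in>carrier W. q = inv\<^bsub>W\<^esub> w \<otimes>\<^bsub>W\<^esub> cox_gen S m s \<otimes>\<^bsub>W\<^esub> w))"

lemma rep_spec:
  assumes "q \<in> Q"
  shows "rep q \<in> Rp" "\<exists>w\<in>carrier W. q = inv\<^bsub>W\<^esub> w \<otimes>\<^bsub>W\<^esub> cox_gen S m (rep q) \<otimes>\<^bsub>W\<^esub> w"
proof -
  have "\<exists>s. s \<in> Rp \<and> (\<exists>w\<in>carrier W. q = inv\<^bsub>W\<^esub> w \<otimes>\<^bsub>W\<^esub> cox_gen S m s \<otimes>\<^bsub>W\<^esub> w)"
    using bspec[OF R_cover assms] by auto
  then have "rep q \<in> Rp \<and> (\<exists>w\<in>carrier W. q = inv\<^bsub>W\<^esub> w \<otimes>\<^bsub>W\<^esub> cox_gen S m (rep q) \<otimes>\<^bsub>W\<^esub> w)"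
    unfolding rep_def by (rule someI_ex)
  then show "rep q \<in> Rp" "\<exists>w\<in>carrier W. q = inv\<^bsub>W\<^esub> w \<otimes>\<^bsub>W\<^esub> cox_gen S m (rep q) \<otimes>\<^bsub>W\<^esub> w"
    by blast+
qed

lemma rep_unique:
  assumes s: "s \<in> Rp" and w: "w \<in> carrier W"
    and q: "q = inv\<^bsub>W\<^esub> w \<otimes>\<^bsub>W\<^esub> cox_gen S m s \<otimes>\<^bsub>W\<^esub> w"
  shows "rep q = s"
proof -
  have sS: "s \<in> S" using s R_sub by auto
  with w q have "q \<in> Q" unfolding coxeter_quandle_iff by blast
  then obtain v where v: "v \<in> carrier W" "q = inv\<^bsub>W\<^esub> v \<otimes>\<^bsub>W\<^esub> cox_gen S m (rep q) \<otimes>\<^bsub>W\<^esub> v"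
    and t: "rep q \<in> Rp" using rep_spec by blast
  have "cox_gen S m (rep q) = inv\<^bsub>W\<^esub> (inv\<^bsub>W\<^esub> v) \<otimes>\<^bsub>W\<^esub> q \<otimes>\<^bsub>W\<^esub> inv\<^bsub>W\<^esub> v"
    using t R_sub by (intro W.conj_inverse[OF cox_gen_closed v(1) v(2)]) auto
  also have "\<dots> = inv\<^bsub>W\<^esub> (w \<otimes>\<^bsub>W\<^esub> inv\<^bsub>W\<^esub> v) \<otimes>\<^bsub>W\<^esub> cox_gen S m s \<otimes>\<^bsub>W\<^esub> (w \<otimes>\<^bsub>W\<^esub> inv\<^bsub>W\<^esub> v)"
    unfolding q by (rule W.conj_mult[OF cox_gen_closed[OF sS] w W.inv_closed[OF v(1)]])
  finally have "\<exists>u\<in>carrier W. cox_gen S m (rep q) = inv\<^bsub>W\<^esub> u \<otimes>\<^bsub>W\<^esub> cox_gen S m s \<otimes>\<^bsub>W\<^esub> u"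
    using w v(1) by blast
  then show ?thesis
    using R_distinct s t by metis
qed

lemma rep_cox_gen: "s \<in> Rp \<Longrightarrow> rep (cox_gen S m s) = s"
  using R_sub by (intro rep_unique[OF _ W.one_closed]) (auto simp: cox_gen_closed)

lemma rep_quandle_op:
  assumes x: "x \<in> Q" and y: "y \<in> Q"
  shows "rep (quandle_op S m x y) = rep x"
proof -
  obtain w where w: "w \<in> carrier W" "x = inv\<^bsub>W\<^esub> w \<otimes>\<^bsub>W\<^esub> cox_gen S m (rep x) \<otimes>\<^bsub>W\<^esub> w"
    using rep_spec(2)[OF x] by blast
  have "rep x \<in> S" using rep_spec(1)[OF x] R_sub by auto
  then have "quandle_op S m x y
      = inv\<^bsub>W\<^esub> (w \<otimes>\<^bsub>W\<^esub> y) \<otimes>\<^bsub>W\<^esub> cox_gen S m (rep x) \<otimes>\<^bsub>W\<^esub> (w \<otimes>\<^bsub>W\<^esub> y)"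
    using quandle_op_eq_conj[OF x y] w(2)
      W.conj_mult[OF cox_gen_closed w(1) coxeter_quandle_closed[OF y]] by metis
  then show ?thesis
    by (rule rep_unique[OF rep_spec(1)[OF x] W.m_closed[OF w(1) coxeter_quandle_closed[OF y]]])
qed

lemma ab_class_adj_gen_rep:
  assumes x: "x \<in> Q"
  shows "ab_class G (adj_gen S m x) = ab_class G (adj_gen S m (cox_gen S m (rep x)))"
proof -
  obtain w where w: "w \<in> carrier W" "x = inv\<^bsub>W\<^esub> w \<otimes>\<^bsub>W\<^esub> cox_gen S m (rep x) \<otimes>\<^bsub>W\<^esub> w"
    using rep_spec(2)[OF x] by blast
  have "rep x \<in> S" using rep_spec(1)[OF x] R_sub by auto
  from ab_class_adj_gen_conj[OF w(1) cox_gen_in_coxeter_quandle[OF this]]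
  show ?thesis by (simp only: w(2)[symmetric])
qed

abbreviation "F \<equiv> free_Abelian_group Rp"

definition rep_hom :: "(('a \<times> bool) list set \<times> bool) list set \<Rightarrow> 'a \<Rightarrow>\<^sub>0 int" where
  "rep_hom = pres_lift F (\<lambda>q. frag_of (rep q))"

lemma frag_of_rep_closed: "(\<lambda>q. frag_of (rep q)) ` Q \<subseteq> carrier F"
  using rep_spec(1) by auto

lemma word_eval_adjoint_relator:
  assumes "r \<in> adjoint_relators S m"
  shows "word_eval F (\<lambda>q. frag_of (rep q)) r = \<one>\<^bsub>F\<^esub>"
proof -
  obtain x y where r: "r = [(y, False), (x, True), (y, True), (quandle_op S m x y, False)]"
    and x: "x \<in> Q" and y: "y \<in> Q"
    using assms unfolding adjoint_relators_def by auto
  have "Poly_Mapping.keys (frag_of (rep z)) \<subseteq> Rp" if "z \<in> Q" for z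
    using rep_spec(1)[OF that] by simp
  with x y quandle_op_closed[OF x y] rep_quandle_op[OF x y] show ?thesis
    unfolding r by simp
qed

lemma rep_hom_hom: "rep_hom \<in> hom G F"
  unfolding rep_hom_def adjoint_group_def
  by (rule group.pres_lift_hom[OF group_free_Abelian_group frag_of_rep_closed
        word_eval_adjoint_relator])

lemma rep_hom_adj_gen: "x \<in> Q \<Longrightarrow> rep_hom (adj_gen S m x) = frag_of (rep x)"
  using group.pres_lift_class[OF group_free_Abelian_group frag_of_rep_closed
      word_eval_adjoint_relator, where u = "[(x, True)]"]
  by (simp add: rep_hom_def adj_gen_def pres_gen_def)

sublocale rep_hom: group_hom G F rep_hom
  using rep_hom_hom by (simp add: group_hom_def group_hom_axioms_def G.group_axioms)

lemma rep_hom_surj: "rep_hom ` carrier G = carrier F"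
proof
  show "rep_hom ` carrier G \<subseteq> carrier F" using rep_hom.hom_closed by blast
  show "carrier F \<subseteq> rep_hom ` carrier G"
  proof
    fix c assume "c \<in> carrier F"
    then have "Poly_Mapping.keys c \<subseteq> Rp" by simp
    then show "c \<in> rep_hom ` carrier G"
    proof (induction c rule: frag_induction)
      case zero
      show ?case using rep_hom.hom_one G.one_closed by (metis image_eqI one_free_Abelian_group)
    next
      case (diff a b)
      then obtain g h where gh: "g \<in> carrier G" "a = rep_hom g" "h \<in> carrier G" "b = rep_hom h"
        by blast
      then have "rep_hom (g \<otimes>\<^bsub>G\<^esub> inv\<^bsub>G\<^esub> h) = a - b"
        using rep_hom.hom_closed[OF gh(3)] by simp
      with gh show ?case by (metis G.inv_closed G.m_closed image_eqI)
    next
      case (one s)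
      then have "s \<in> S" using R_sub by auto
      then have "rep_hom (adj_gen S m (cox_gen S m s)) = frag_of s"
        using rep_hom_adj_gen[OF cox_gen_in_coxeter_quandle] rep_cox_gen[OF one] by simp
      then show ?case
        using adj_gen_closed[OF cox_gen_in_coxeter_quandle[OF \<open>s \<in> S\<close>]] by (metis image_eqI)
    qed
  qed
qed

lemma derived_subset_kernel_rep_hom: "derived G (carrier G) \<subseteq> kernel G F rep_hom"
  unfolding derived_def
proof (rule G.generate_subgroup_incl[OF _ rep_hom.subgroup_kernel])
  show "derived_set G (carrier G) \<subseteq> kernel G F rep_hom"
  proof
    fix z assume "z \<in> derived_set G (carrier G)"
    then obtain a b where ab: "a \<in> carrier G" "b \<in> carrier G"
      "z = a \<otimes>\<^bsub>G\<^esub> b \<otimes>\<^bsub>G\<^esub> inv\<^bsub>G\<^esub> a \<otimes>\<^bsub>G\<^esub> inv\<^bsub>G\<^esub> b" by auto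
    have "Poly_Mapping.keys (rep_hom a) \<subseteq> Rp" "Poly_Mapping.keys (rep_hom b) \<subseteq> Rp"
      using rep_hom.hom_closed[OF ab(1)] rep_hom.hom_closed[OF ab(2)] by simp_all
    with ab have "rep_hom z = 0" by simp
    with ab show "z \<in> kernel G F rep_hom" by (simp add: kernel_def)
  qed
qed

lemma kernel_rep_hom_subset_derived: "kernel G F rep_hom \<subseteq> derived G (carrier G)"
proof
  have "(\<lambda>s. ab_class G (adj_gen S m (cox_gen S m s))) ` Rp \<subseteq> carrier Ab"
    using R_sub by (auto intro!: ab.hom_closed adj_gen_closed cox_gen_in_coxeter_quandle)
  then obtain psi where psi: "psi \<in> hom F Ab"
    "\<And>s. s \<in> Rp \<Longrightarrow> psi (frag_of s) = ab_class G (adj_gen S m (cox_gen S m s))"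
    using Ab.free_Abelian_group_universal by metis
  have psi_rep_hom: "psi (rep_hom g) = ab_class G g" if "g \<in> carrier G" for g
  proof (rule presented_group_hom_eqI[OF Ab.is_group, of "psi \<circ> rep_hom" _ _ "ab_class G",
        simplified])
    show "psi \<circ> rep_hom \<in> hom (presented_group Q (adjoint_relators S m)) Ab"
      using hom_compose[OF rep_hom_hom psi(1)] unfolding adjoint_group_def .
    show "ab_class G \<in> hom (presented_group Q (adjoint_relators S m)) Ab"
      using ab_class_hom unfolding adjoint_group_def .
    show "g \<in> carrier (presented_group Q (adjoint_relators S m))"
      using that unfolding adjoint_group_def .
    fix x assume x: "x \<in> Q"
    then show "psi (rep_hom (pres_gen Q (adjoint_relators S m) x))
        = ab_class G (pres_gen Q (adjoint_relators S m) x)"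
      using rep_hom_adj_gen psi(2)[OF rep_spec(1)] ab_class_adj_gen_rep
      by (simp add: adj_gen_def)
  qed
  fix g assume "g \<in> kernel G F rep_hom"
  then have g: "g \<in> carrier G" "rep_hom g = \<one>\<^bsub>F\<^esub>" by (simp_all add: kernel_def)
  have "derived G (carrier G) #>\<^bsub>G\<^esub> g = \<one>\<^bsub>Ab\<^esub>"
    using psi_rep_hom[OF g(1)] g(2) hom_one[OF psi(1) group_free_Abelian_group Ab.is_group]
    by (simp add: ab_class_def)
  then show "g \<in> derived G (carrier G)"
    using G.rcos_self[OF g(1) G.derived_is_subgroup[OF subset_refl]]
    by (simp add: abelianization_def)
qed

lemma kernel_rep_hom: "kernel G F rep_hom = derived G (carrier G)"
  using derived_subset_kernel_rep_hom kernel_rep_hom_subset_derived by (rule subset_antisym[rotated])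

lemma abelianization_iso_free_Abelian_group:
  "\<exists>h. h \<in> iso Ab F \<and> (\<forall>s\<in>Rp. h (ab_class G (adj_gen S m (cox_gen S m s))) = frag_of s)"
proof (intro exI conjI ballI)
  show "(\<lambda>B. the_elem (rep_hom ` B)) \<in> iso Ab F"
    using rep_hom.FactGroup_iso_set[OF rep_hom_surj] unfolding kernel_rep_hom abelianization_def .
  fix s assume s: "s \<in> Rp"
  then have "s \<in> S" using R_sub by auto
  then have e: "adj_gen S m (cox_gen S m s) \<in> carrier G"
    by (intro adj_gen_closed cox_gen_in_coxeter_quandle)
  have "rep_hom ` ab_class G (adj_gen S m (cox_gen S m s)) = {frag_of s}"
    unfolding ab_class_def kernel_rep_hom[symmetric] rep_hom.image_kernel_rcos[OF e]
    using rep_hom_adj_gen cox_gen_in_coxeter_quandle[OF \<open>s \<in> S\<close>] rep_cox_gen[OF s] by simp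
  then show "the_elem (rep_hom ` ab_class G (adj_gen S m (cox_gen S m s))) = frag_of s"
    by simp
qed

end

theorem proposition2p4:
  fixes S :: "'a set" and m :: "'a \<Rightarrow> 'a \<Rightarrow> enat" and Rp :: "'a set"
  assumes finS: "finite S"
    and m_diag: "\<forall>s\<in>S. m s s = 1"
    and m_sym: "\<forall>s\<in>S. \<forall>t\<in>S. m s t = m t s"
    and m_ge2: "\<forall>s\<in>S. \<forall>t\<in>S. s \<noteq> t \<longrightarrow> 2 \<le> m s t"
    and R_sub: "Rp \<subseteq> S"
    and R_cover: "\<forall>q\<in>coxeter_quandle S m. \<exists>s\<in>Rp. \<exists>w\<in>carrier (coxeter_group S m).
                    q = inv\<^bsub>coxeter_group S m\<^esub> w \<otimes>\<^bsub>coxeter_group S m\<^esub> cox_gen S m s \<otimes>\<^bsub>coxeter_group S m\<^esub> w"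
    and R_distinct: "\<forall>s\<in>Rp. \<forall>t\<in>Rp. (\<exists>w\<in>carrier (coxeter_group S m).
                    cox_gen S m t = inv\<^bsub>coxeter_group S m\<^esub> w \<otimes>\<^bsub>coxeter_group S m\<^esub> cox_gen S m s \<otimes>\<^bsub>coxeter_group S m\<^esub> w)
                    \<longrightarrow> s = t"
  shows "(\<exists>h. h \<in> iso (abelianization (adjoint_group S m)) (free_Abelian_group Rp) \<and>
              (\<forall>s\<in>Rp. h (ab_class (adjoint_group S m) (adj_gen S m (cox_gen S m s))) = frag_of s))
         \<and> abelianization (adjoint_group S m) \<cong> free_Abelian_group {..<card Rp}"
proof -
  interpret coxeter_transversal S m Rp
    using m_diag R_sub R_cover R_distinct by unfold_locales
  obtain h where h: "h \<in> iso Ab F"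
    "\<forall>s\<in>Rp. h (ab_class G (adj_gen S m (cox_gen S m s))) = frag_of s"
    using abelianization_iso_free_Abelian_group by blast
  have "finite Rp" using finS R_sub by (rule finite_subset[rotated])
  then have "F \<cong> free_Abelian_group {..<card Rp}"
    by (simp add: isomorphic_free_Abelian_groups eqpoll_iff_finite_card)
  with h show ?thesis using is_isoI iso_trans by blast
qed

end
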